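(* Let $(G,\gamma)$ and $(T,\eta)$ be unary FA-presentable directed graphs and let $g\in G$, $t\in T$. Then the directed graph obtained by attaching $(T,\eta)$ at $t$ to $g$ is unary FA-presentable.
   Context: A directed graph is a set with a binary edge relation. Attaching $(T,\eta)$ at $t$ to the vertex $g$ of $(G,\gamma)$ means taking the disjoint union of the two graphs and identifying $g$ and $t$. A structure $(X,\eta)$ is unary FA-presentable if there exist a regular language $L\subseteq a^*$ and a surjection $\phi:L\to X$ such that $\{(u,v)\in L^2:u\phi=v\phi\}$ and $\{(u,v)\in L^2:(u\phi,v\phi)\in\eta\}$ are regular relations (the words $\mathrm{conv}(u,v)$ over $\{a,\$\}^2$, reading $u,v$ in parallel with the shorter padded by $\$$, form regular languages). *)

theory Defs
  imports Main
begin

definition regular :: "'a list set \<Rightarrow> bool" where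
  "regular L \<longleftrightarrow>
     (\<exists>(Q::nat set) q0 (\<delta>::nat \<Rightarrow> 'a \<Rightarrow> nat) F.
        finite Q \<and> q0 \<in> Q \<and> (\<forall>q\<in>Q. \<forall>x. \<delta> q x \<in> Q) \<and> F \<subseteq> Q \<and>
        L = {w. foldl \<delta> q0 w \<in> F})"

text \<open>Convolution of two words: read in parallel, the shorter padded by the
padding symbol, represented by None (letters x are represented by Some x).\<close>
definition conv :: "'a list \<Rightarrow> 'b list \<Rightarrow> ('a option \<times> 'b option) list" where
  "conv u v = map (\<lambda>i. (if i < length u then Some (u ! i) else None,
                        if i < length v then Some (v ! i) else None))
                  [0..<max (length u) (length v)]"

text \<open>Words over the one-letter alphabet {a} are elements of type unit list.\<close>
definition unary_fa_presentable :: "'v set \<Rightarrow> ('v \<times> 'v) set \<Rightarrow> bool" where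
  "unary_fa_presentable X \<eta> \<longleftrightarrow>
     (\<exists>(L::unit list set) (\<phi>::unit list \<Rightarrow> 'v).
        regular L \<and> \<phi> ` L = X \<and>
        regular {conv u v | u v. u \<in> L \<and> v \<in> L \<and> \<phi> u = \<phi> v} \<and>
        regular {conv u v | u v. u \<in> L \<and> v \<in> L \<and> (\<phi> u, \<phi> v) \<in> \<eta>})"

definition digraph :: "'v set \<Rightarrow> ('v \<times> 'v) set \<Rightarrow> bool" where
  "digraph V E \<longleftrightarrow> E \<subseteq> V \<times> V"

text \<open>Attaching (T,eta) at t to vertex g of (G,gamma): disjoint union (via Inl/Inr)
with t identified with g (t is represented by Inl g).\<close>
definition attach_map :: "'a \<Rightarrow> 'b \<Rightarrow> 'b \<Rightarrow> 'a + 'b" where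
  "attach_map g t s = (if s = t then Inl g else Inr s)"

definition attach_vertices :: "'a set \<Rightarrow> 'b set \<Rightarrow> 'a \<Rightarrow> 'b \<Rightarrow> ('a + 'b) set" where
  "attach_vertices G T g t = Inl ` G \<union> attach_map g t ` T"

definition attach_edges ::
  "('a \<times> 'a) set \<Rightarrow> ('b \<times> 'b) set \<Rightarrow> 'a \<Rightarrow> 'b \<Rightarrow> (('a + 'b) \<times> ('a + 'b)) set" where
  "attach_edges \<gamma> \<eta> g t =
     map_prod Inl Inl ` \<gamma> \<union> map_prod (attach_map g t) (attach_map g t) ` \<eta>"

end

theory Submission
  imports Defs
begin

text \<open>Over the one-letter alphabet everything reduces to sets and relations on \<open>\<nat>\<close>:
  by Myhill--Nerode, a language is regular iff it has finitely many derivatives, so a set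
  \<open>A\<close> of naturals is regular iff it has finitely many translates, and a relation \<open>S\<close> is regular
  (as a language of convolutions) iff it has finitely many diagonal translates and finitely
  many translates of the tails of its rows and columns beyond the diagonal. These notions are
  closed under union, products, sections, the diagonal, and relabelling codes by parity.

  Attaching \<open>T\<close> at \<open>t\<close> to \<open>g\<close> is the disjoint union of the two graphs followed by collapsing
  the two vertices \<open>g\<close> and \<open>t\<close>. The disjoint union is presented by giving \<open>G\<close> the even and
  \<open>T\<close> the odd codes. Collapsing a finite set \<open>P\<close> of vertices only adds to the equality and
  edge relations products of finitely many rows and columns of the old relations, so
  regularity is preserved.\<close>

lemma finite_range_factorI:
  assumes "finite (range f)" and "\<And>x. F x = G (f (h x))"
  shows "finite (range F)"
proof -
  have "range F \<subseteq> G ` range f"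
    using assms(2) by auto
  then show ?thesis
    using assms(1) by (meson finite_imageI finite_subset)
qed

lemma finite_range_in: "finite A \<Longrightarrow> (\<And>x. f x \<in> A) \<Longrightarrow> finite (range f)"
  by (meson finite_subset image_subsetI)

lemma finite_range_combine:
  "finite (range f) \<Longrightarrow> finite (range g) \<Longrightarrow> finite (range (\<lambda>x. h (f x) (g x)))"
  by (rule finite_range_in[where A = "(\<lambda>(a, b). h a b) ` (range f \<times> range g)"]) auto

section \<open>Derivatives\<close>

definition lang_deriv :: "'a list \<Rightarrow> 'a list set \<Rightarrow> 'a list set" where
  "lang_deriv w L = {v. w @ v \<in> L}"

lemma lang_deriv_Nil [simp]: "lang_deriv [] L = L"
  by (simp add: lang_deriv_def)

lemma lang_deriv_snoc: "lang_deriv (w @ [x]) L = lang_deriv [x] (lang_deriv w L)"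
  by (simp add: lang_deriv_def)

lemma regular_finite_derivs:
  assumes "regular L"
  shows "finite (range (\<lambda>w. lang_deriv w L))"
proof -
  from assms obtain Q q0 \<delta> F where Q: "finite (Q::nat set)" "q0 \<in> Q" "\<forall>q\<in>Q. \<forall>x. \<delta> q x \<in> Q"
    and L: "L = {w. foldl \<delta> q0 w \<in> F}"
    unfolding regular_def by blast
  have reach: "q \<in> Q \<Longrightarrow> foldl \<delta> q w \<in> Q" for w q
    using Q(3) by (induct w arbitrary: q) auto
  have "lang_deriv w L = (\<lambda>q. {v. foldl \<delta> q v \<in> F}) (foldl \<delta> q0 w)" for w
    by (simp add: lang_deriv_def L)
  then have "range (\<lambda>w. lang_deriv w L) \<subseteq> (\<lambda>q. {v. foldl \<delta> q v \<in> F}) ` Q"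
    using reach Q(2) by auto
  then show ?thesis
    using Q(1) finite_subset by blast
qed

text \<open>The minimal automaton: its states are the derivatives, numbered through a bijection with
  an initial segment of the naturals.\<close>
lemma finite_derivs_regular:
  assumes "finite (range (\<lambda>w. lang_deriv w L))"
  shows "regular L"
proof -
  define D where "D = range (\<lambda>w. lang_deriv w L)"
  obtain h where h: "bij_betw h {0..<card D} D"
    using ex_bij_betw_nat_finite assms unfolding D_def by blast
  define e where "e = inv_into {0..<card D} h"
  have derivs_in_D: "lang_deriv w L \<in> D" for w
    unfolding D_def by blast
  have e_in: "X \<in> D \<Longrightarrow> e X \<in> {0..<card D}" and h_e: "X \<in> D \<Longrightarrow> h (e X) = X" for X
    unfolding e_def using h by (metis bij_betw_def inv_into_into, metis bij_betw_def f_inv_into_f)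
  define \<delta> where "\<delta> = (\<lambda>q x. e (lang_deriv [x] (h q)))"
  have run: "foldl \<delta> (e L) w = e (lang_deriv w L)" for w
  proof (induct w rule: rev_induct)
    case Nil
    then show ?case by simp
  next
    case (snoc x w)
    then show ?case by (simp add: \<delta>_def h_e derivs_in_D lang_deriv_snoc)
  qed
  show ?thesis
    unfolding regular_def
  proof (intro exI conjI)
    show "\<forall>q\<in>{0..<card D}. \<forall>x. \<delta> q x \<in> {0..<card D}"
    proof (intro ballI allI)
      fix q x
      assume "q \<in> {0..<card D}"
      then have "h q \<in> D"
        using h bij_betwE by blast
      then obtain w where "h q = lang_deriv w L"
        unfolding D_def by blast
      then show "\<delta> q x \<in> {0..<card D}"
        using e_in derivs_in_D[of "w @ [x]"] by (simp add: \<delta>_def lang_deriv_snoc)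
    qed
    show "L = {w. foldl \<delta> (e L) w \<in> {q \<in> {0..<card D}. [] \<in> h q}}"
      using e_in h_e derivs_in_D by (auto simp: run lang_deriv_def)
  qed (use e_in derivs_in_D[of "[]"] in auto)
qed

lemma deriv_closed_regular:
  assumes "finite \<L>" and "L \<in> \<L>" and "\<And>X x. X \<in> \<L> \<Longrightarrow> lang_deriv [x] X \<in> \<L>"
  shows "regular L"
proof (rule finite_derivs_regular)
  have "lang_deriv w L \<in> \<L>" for w
  proof (induct w rule: rev_induct)
    case (snoc x w)
    then show ?case by (simp add: assms(3) lang_deriv_snoc)
  qed (simp add: assms(2))
  then have "range (\<lambda>w. lang_deriv w L) \<subseteq> \<L>"
    by blast
  then show "finite (range (\<lambda>w. lang_deriv w L))"
    using assms(1) by (rule finite_subset)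
qed

definition unary :: "nat \<Rightarrow> unit list" where
  "unary n = replicate n ()"

lemma length_unary [simp]: "length (unary n) = n"
  by (simp add: unary_def)

lemma unary_length: "unary (length w) = w"
  by (induct w) (auto simp: unary_def)

lemma unary_0: "unary 0 = []" and unary_Suc: "unary (Suc n) = () # unary n"
  by (simp_all add: unary_def)

lemma unary_append: "unary m @ unary n = unary (m + n)"
  by (simp add: unary_def replicate_add)

lemma mem_image_unary_iff: "w \<in> unary ` A \<longleftrightarrow> length w \<in> A"
  by (metis image_iff length_unary unary_length)

lemma image_unary_preimage: "unary ` {n. unary n \<in> L} = L"
  by (auto simp: mem_image_unary_iff unary_length)

definition regular_nat_set :: "nat set \<Rightarrow> bool" where
  "regular_nat_set A \<longleftrightarrow> finite (range (\<lambda>k. {j. k + j \<in> A}))"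

lemma regular_image_unary_iff: "regular (unary ` A) \<longleftrightarrow> regular_nat_set A"
proof
  assume "regular (unary ` A)"
  then have "finite (range (\<lambda>w. lang_deriv w (unary ` A)))"
    by (rule regular_finite_derivs)
  moreover have "{j. k + j \<in> A} = {j. unary j \<in> lang_deriv (unary k) (unary ` A)}" for k
    by (simp add: lang_deriv_def unary_append mem_image_unary_iff)
  ultimately show "regular_nat_set A"
    unfolding regular_nat_set_def by (rule finite_range_factorI)
next
  assume "regular_nat_set A"
  moreover have "lang_deriv w (unary ` A) = unary ` {j. length w + j \<in> A}" for w
    unfolding lang_deriv_def by (auto simp: mem_image_unary_iff)
  ultimately show "regular (unary ` A)"
    unfolding regular_nat_set_def by (rule finite_derivs_regular[OF finite_range_factorI])
qed

lemma conv_Cons_Cons: "conv (x # u) (y # v) = (Some x, Some y) # conv u v"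
  and conv_Cons_Nil: "conv (x # u) [] = (Some x, None) # conv u []"
  and conv_Nil_Cons: "conv [] (y # v) = (None, Some y) # conv [] v"
  and conv_Nil_Nil: "conv [] [] = []"
  by (simp_all add: conv_def upt_conv_Cons map_Suc_upt[symmetric] del: upt_Suc)

abbreviation SS :: "unit option \<times> unit option" where "SS \<equiv> (Some (), Some ())"
abbreviation SN :: "unit option \<times> unit option" where "SN \<equiv> (Some (), None)"
abbreviation NS :: "unit option \<times> unit option" where "NS \<equiv> (None, Some ())"

lemma unit_letter_cases: "(x::unit option \<times> unit option) \<in> {SS, SN, NS, (None, None)}"
  by (cases x; rename_tac a b; case_tac a; case_tac b) simp_all

definition conv_unary :: "nat \<Rightarrow> nat \<Rightarrow> (unit option \<times> unit option) list" where
  "conv_unary m n = conv (unary m) (unary n)"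

lemma conv_unary_eq:
  "conv_unary m n = replicate (min m n) SS @ replicate (m - n) SN @ replicate (n - m) NS"
proof (induct m arbitrary: n)
  case 0
  show ?case
    by (induct n) (simp_all add: conv_unary_def unary_0 unary_Suc conv_Nil_Cons conv_Nil_Nil)
next
  case (Suc m)
  have "conv_unary (Suc m) 0 = replicate (Suc m) SN"
    by (induct m) (simp_all add: conv_unary_def unary_0 unary_Suc conv_Cons_Nil conv_Nil_Nil)
  with Suc show ?case
    by (cases n) (simp_all add: conv_unary_def unary_Suc conv_Cons_Cons)
qed

lemma conv_unary_inject: "conv_unary m n = conv_unary m' n' \<longleftrightarrow> m = m' \<and> n = n'"
proof -
  have "length (filter (\<lambda>p. fst p \<noteq> None) (conv_unary m n)) = m"
    and "length (filter (\<lambda>p. snd p \<noteq> None) (conv_unary m n)) = n" for m n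
    by (simp_all add: conv_unary_eq)
  then show ?thesis
    by metis
qed

lemma conv_unary_Suc_Suc: "conv_unary (Suc m) (Suc n) = SS # conv_unary m n"
  and conv_unary_left: "conv_unary m 0 = replicate m SN"
  and conv_unary_right: "conv_unary 0 n = replicate n NS"
  by (simp_all add: conv_unary_eq)

lemma conv_unary_add: "conv_unary (k + m) (k + n) = replicate k SS @ conv_unary m n"
  by (simp add: conv_unary_eq flip: min_add_distrib_right replicate_add)

lemma Cons_eq_conv_unary_iff:
  "SS # v = conv_unary m n \<longleftrightarrow> (\<exists>m' n'. m = Suc m' \<and> n = Suc n' \<and> v = conv_unary m' n')"
  "SN # v = conv_unary m n \<longleftrightarrow> (\<exists>m'. m = Suc m' \<and> n = 0 \<and> v = replicate m' SN)"
  "NS # v = conv_unary m n \<longleftrightarrow> (\<exists>n'. m = 0 \<and> n = Suc n' \<and> v = replicate n' NS)"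
  "(None, None) # v \<noteq> conv_unary m n"
  by (cases m; cases n; simp add: conv_unary_Suc_Suc conv_unary_left conv_unary_right)+

definition conv_lang :: "(nat \<times> nat) set \<Rightarrow> (unit option \<times> unit option) list set" where
  "conv_lang S = (\<lambda>(m, n). conv_unary m n) ` S"

lemma conv_unary_in_conv_lang_iff [simp]: "conv_unary m n \<in> conv_lang S \<longleftrightarrow> (m, n) \<in> S"
  unfolding conv_lang_def using conv_unary_inject by fastforce

lemma conv_image_eq_conv_lang:
  "{conv u v | u v. u \<in> L \<and> v \<in> L \<and> P u v} =
     conv_lang {(m, n). unary m \<in> L \<and> unary n \<in> L \<and> P (unary m) (unary n)}"
  unfolding conv_lang_def conv_unary_def
  by (auto simp: image_iff) (metis unary_length)

section \<open>Regular relations on the naturals\<close>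

text \<open>The derivatives of \<open>conv_lang S\<close>: after \<open>k\<close> letters \<open>SS\<close> we are left
  with \<open>shift_rel k S\<close>, and after \<open>d\<close> further letters \<open>SN\<close> (resp. \<open>NS\<close>) only
  padded words remain, described by \<open>left_tail S k d\<close> (resp. \<open>right_tail S k d\<close>).\<close>
definition shift_rel :: "nat \<Rightarrow> (nat \<times> nat) set \<Rightarrow> (nat \<times> nat) set" where
  "shift_rel k S = {(m, n). (k + m, k + n) \<in> S}"

definition left_tail :: "(nat \<times> nat) set \<Rightarrow> nat \<Rightarrow> nat \<Rightarrow> nat set" where
  "left_tail S k d = {e. (k + d + e, k) \<in> S}"

definition right_tail :: "(nat \<times> nat) set \<Rightarrow> nat \<Rightarrow> nat \<Rightarrow> nat set" where
  "right_tail S k d = {e. (k, k + d + e) \<in> S}"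

definition regular_nat_rel :: "(nat \<times> nat) set \<Rightarrow> bool" where
  "regular_nat_rel S \<longleftrightarrow>
     finite (range (\<lambda>k. shift_rel k S)) \<and>
     finite (range (\<lambda>(k, d). left_tail S k d)) \<and>
     finite (range (\<lambda>(k, d). right_tail S k d))"

lemma lang_deriv_conv_lang_shift_rel:
  "lang_deriv [SS] (conv_lang (shift_rel k S)) = conv_lang (shift_rel (Suc k) S)"
  "lang_deriv [SN] (conv_lang (shift_rel k S)) = (\<lambda>e. replicate e SN) ` left_tail S k 1"
  "lang_deriv [NS] (conv_lang (shift_rel k S)) = (\<lambda>e. replicate e NS) ` right_tail S k 1"
  "lang_deriv [(None, None)] (conv_lang R) = {}"
  by (auto simp: lang_deriv_def conv_lang_def shift_rel_def left_tail_def right_tail_def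
      Cons_eq_conv_unary_iff image_iff conv_unary_left conv_unary_right) (metis add_Suc_right)

lemma lang_deriv_replicate:
  "lang_deriv [x] ((\<lambda>e. replicate e c) ` Y) =
     (if x = c then (\<lambda>e. replicate e c) ` {e. Suc e \<in> Y} else {})"
proof -
  have "x # v = replicate e c \<longleftrightarrow> x = c \<and> (\<exists>e'. e = Suc e' \<and> v = replicate e' c)" for v e
    by (cases e) auto
  then show ?thesis
    by (auto simp: lang_deriv_def)
qed

lemma Suc_mem_tail_iff:
  "{e. Suc e \<in> left_tail S k d} = left_tail S k (Suc d)"
  "{e. Suc e \<in> right_tail S k d} = right_tail S k (Suc d)"
  by (simp_all add: left_tail_def right_tail_def)

lemma regular_nat_rel_imp_regular:
  assumes "regular_nat_rel S"
  shows "regular (conv_lang S)"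
proof (rule deriv_closed_regular)
  let ?rep = "\<lambda>c Y. (\<lambda>e. replicate e c) ` Y"
  define \<L> where "\<L> = insert {}
    (conv_lang ` range (\<lambda>k. shift_rel k S) \<union>
     ?rep SN ` range (\<lambda>(k, d). left_tail S k d) \<union> ?rep NS ` range (\<lambda>(k, d). right_tail S k d))"
  show "finite \<L>"
    using assms unfolding \<L>_def regular_nat_rel_def by simp
  have in_\<L>: "conv_lang (shift_rel k S) \<in> \<L>" "?rep SN (left_tail S k d) \<in> \<L>"
    "?rep NS (right_tail S k d) \<in> \<L>" "{} \<in> \<L>" for k d
    unfolding \<L>_def by (blast, force, force, blast)
  have "shift_rel 0 S = S"
    by (simp add: shift_rel_def)
  then show "conv_lang S \<in> \<L>"
    using in_\<L>(1)[of 0] by simp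
  fix X x
  assume "X \<in> \<L>"
  then consider "X = {}" | k where "X = conv_lang (shift_rel k S)"
    | k d where "X = ?rep SN (left_tail S k d)" | k d where "X = ?rep NS (right_tail S k d)"
    unfolding \<L>_def by auto
  then show "lang_deriv [x] X \<in> \<L>"
  proof cases
    case 1
    then show ?thesis by (simp add: in_\<L> lang_deriv_def)
  next
    case (2 k)
    then show ?thesis
      using unit_letter_cases[of x] in_\<L> by (auto simp: lang_deriv_conv_lang_shift_rel)
  qed (simp_all add: in_\<L> lang_deriv_replicate Suc_mem_tail_iff)
qed

lemma regular_imp_regular_nat_rel:
  assumes "regular (conv_lang S)"
  shows "regular_nat_rel S"
proof -
  have derivs: "finite (range (\<lambda>w. lang_deriv w (conv_lang S)))"
    using assms by (rule regular_finite_derivs)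
  have "shift_rel k S = {(m, n). conv_unary m n \<in> lang_deriv (replicate k SS) (conv_lang S)}" for k
    by (simp add: shift_rel_def lang_deriv_def flip: conv_unary_add)
  with derivs have "finite (range (\<lambda>k. shift_rel k S))"
    by (rule finite_range_factorI)
  moreover have "left_tail S k d =
      {e. replicate e SN \<in> lang_deriv (replicate k SS @ replicate d SN) (conv_lang S)}" for k d
  proof -
    have "replicate k SS @ replicate d SN @ replicate e SN = conv_unary (k + d + e) k" for e
      by (simp add: conv_unary_eq replicate_add)
    then show ?thesis
      by (simp add: left_tail_def lang_deriv_def)
  qed
  with derivs have "finite (range (\<lambda>(k, d). left_tail S k d))"
    by (intro finite_range_factorI[where h = "\<lambda>(k, d). replicate k SS @ replicate d SN"
          and G = "\<lambda>X. {e. replicate e SN \<in> X}"]) auto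
  moreover have "right_tail S k d =
      {e. replicate e NS \<in> lang_deriv (replicate k SS @ replicate d NS) (conv_lang S)}" for k d
  proof -
    have "replicate k SS @ replicate d NS @ replicate e NS = conv_unary k (k + d + e)" for e
      by (simp add: conv_unary_eq replicate_add)
    then show ?thesis
      by (simp add: right_tail_def lang_deriv_def)
  qed
  with derivs have "finite (range (\<lambda>(k, d). right_tail S k d))"
    by (intro finite_range_factorI[where h = "\<lambda>(k, d). replicate k SS @ replicate d NS"
          and G = "\<lambda>X. {e. replicate e NS \<in> X}"]) auto
  ultimately show ?thesis
    unfolding regular_nat_rel_def by blast
qed

lemma regular_nat_set_Un:
  "regular_nat_set A \<Longrightarrow> regular_nat_set B \<Longrightarrow> regular_nat_set (A \<union> B)"
  unfolding regular_nat_set_def Un_iff Collect_disj_eq by (rule finite_range_combine)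

lemma regular_nat_set_UN:
  assumes "finite I" and "\<And>i. i \<in> I \<Longrightarrow> regular_nat_set (B i)"
  shows "regular_nat_set (\<Union>i\<in>I. B i)"
  using assms
proof (induction I rule: finite_induct)
  case empty
  then show ?case by (simp add: regular_nat_set_def)
next
  case (insert i I)
  then show ?case by (simp add: regular_nat_set_Un)
qed

lemma regular_nat_rel_Un:
  assumes "regular_nat_rel S" and "regular_nat_rel R"
  shows "regular_nat_rel (S \<union> R)"
proof -
  have "shift_rel k (S \<union> R) = shift_rel k S \<union> shift_rel k R"
    and "left_tail (S \<union> R) k d = left_tail S k d \<union> left_tail R k d"
    and "right_tail (S \<union> R) k d = right_tail S k d \<union> right_tail R k d" for k d
    by (auto simp: shift_rel_def left_tail_def right_tail_def)
  then show ?thesis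
    using assms unfolding regular_nat_rel_def
    by (simp add: case_prod_beta) (intro conjI finite_range_combine[where h = "(\<union>)"]; blast)
qed

lemma regular_nat_rel_Times:
  assumes "regular_nat_set A" and "regular_nat_set B"
  shows "regular_nat_rel (A \<times> B)"
proof -
  have "shift_rel k (A \<times> B) = {j. k + j \<in> A} \<times> {j. k + j \<in> B}" for k
    by (auto simp: shift_rel_def)
  then have "finite (range (\<lambda>k. shift_rel k (A \<times> B)))"
    using assms unfolding regular_nat_set_def by (simp add: finite_range_combine[where h = "(\<times>)"])
  moreover have "left_tail (A \<times> B) k d \<in> insert {} (range (\<lambda>k. {j. k + j \<in> A}))"
    and "right_tail (A \<times> B) k d \<in> insert {} (range (\<lambda>k. {j. k + j \<in> B}))" for k d
    by (cases "k \<in> A"; cases "k \<in> B"; force simp: left_tail_def right_tail_def)+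
  then have "finite (range (\<lambda>(k, d). left_tail (A \<times> B) k d))"
    and "finite (range (\<lambda>(k, d). right_tail (A \<times> B) k d))"
    using assms unfolding regular_nat_set_def
    by (intro finite_range_in[where A = "insert {} (range (\<lambda>k. {j. k + j \<in> A}))"]
        finite_range_in[where A = "insert {} (range (\<lambda>k. {j. k + j \<in> B}))"]; simp split: prod.split)+
  ultimately show ?thesis
    unfolding regular_nat_rel_def by blast
qed

text \<open>A row \<open>{n. (m, n) \<in> S}\<close> is read off the tails beyond \<open>m\<close>, except for the
  finitely many translates by \<open>k < m\<close>.\<close>
lemma regular_nat_set_row:
  assumes "regular_nat_rel S"
  shows "regular_nat_set {n. (m, n) \<in> S}"
  unfolding regular_nat_set_def
proof (rule finite_range_in)
  let ?A = "(\<lambda>k. {j. (m, k + j) \<in> S}) ` {..<m} \<union> range (\<lambda>(k, d). right_tail S k d)"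
  show "finite ?A"
    using assms unfolding regular_nat_rel_def by simp
  fix k
  show "{j. k + j \<in> {n. (m, n) \<in> S}} \<in> ?A"
  proof (cases "k < m")
    case False
    then have "{j. k + j \<in> {n. (m, n) \<in> S}} = right_tail S m (k - m)"
      by (auto simp: right_tail_def)
    then show ?thesis
      by (metis (no_types, lifting) UnI2 case_prod_conv rangeI)
  qed auto
qed

lemma regular_nat_set_column:
  assumes "regular_nat_rel S"
  shows "regular_nat_set {m. (m, n) \<in> S}"
  unfolding regular_nat_set_def
proof (rule finite_range_in)
  let ?A = "(\<lambda>k. {j. (k + j, n) \<in> S}) ` {..<n} \<union> range (\<lambda>(k, d). left_tail S k d)"
  show "finite ?A"
    using assms unfolding regular_nat_rel_def by simp
  fix k
  show "{j. k + j \<in> {m. (m, n) \<in> S}} \<in> ?A"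
  proof (cases "k < n")
    case False
    then have "{j. k + j \<in> {m. (m, n) \<in> S}} = left_tail S n (k - n)"
      by (auto simp: left_tail_def)
    then show ?thesis
      by (metis (no_types, lifting) UnI2 case_prod_conv rangeI)
  qed auto
qed

lemma regular_nat_set_diagonal:
  assumes "regular_nat_rel S"
  shows "regular_nat_set {m. (m, m) \<in> S}"
proof -
  have "{j. k + j \<in> {m. (m, m) \<in> S}} = {j. (j, j) \<in> shift_rel k S}" for k
    by (simp add: shift_rel_def)
  with assms show ?thesis
    unfolding regular_nat_set_def regular_nat_rel_def by (auto intro: finite_range_factorI)
qed

definition tag_rel :: "nat \<Rightarrow> nat \<Rightarrow> (nat \<times> nat) set \<Rightarrow> (nat \<times> nat) set" where
  "tag_rel i j S = {(a, b). a mod 2 = i \<and> b mod 2 = j \<and> (a div 2, b div 2) \<in> S}"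

lemma add_mod_div_2:
  fixes k a :: nat
  shows "(k + a) mod 2 = (k mod 2 + a) mod 2" and "(k + a) div 2 = k div 2 + (k mod 2 + a) div 2"
proof -
  show "(k + a) mod 2 = (k mod 2 + a) mod 2"
    by (simp add: mod_add_left_eq)
  have "k + a = (k mod 2 + a) + k div 2 * 2"
    by simp
  then show "(k + a) div 2 = k div 2 + (k mod 2 + a) div 2"
    by (metis add.commute div_mult_self1 zero_neq_numeral)
qed

lemma regular_nat_rel_tag_rel:
  assumes "regular_nat_rel S"
  shows "regular_nat_rel (tag_rel i j S)"
proof -
  define F where "F = (\<lambda>(r::nat, X). {(a, b). (r + a) mod 2 = i \<and> (r + b) mod 2 = j \<and>
    ((r + a) div 2, (r + b) div 2) \<in> X})"
  have "shift_rel k (tag_rel i j S) = F (k mod 2, shift_rel (k div 2) S)" for k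
    by (auto simp: F_def shift_rel_def tag_rel_def add_mod_div_2[of k])
  then have "finite (range (\<lambda>k. shift_rel k (tag_rel i j S)))"
    using assms unfolding regular_nat_rel_def
    by (intro finite_range_in[where A = "F ` ({..<2} \<times> range (\<lambda>k. shift_rel k S))"]) auto
  moreover
  define G where "G = (\<lambda>(t::nat, r::nat, X). {e. (t + e) mod 2 = i \<and> r = j \<and> (t + e) div 2 \<in> X})"
  have "left_tail (tag_rel i j S) k d =
      G ((k mod 2 + d) mod 2, k mod 2, left_tail S (k div 2) ((k mod 2 + d) div 2))" for k d
    by (auto simp: G_def left_tail_def tag_rel_def add_mod_div_2[of "k + d"] add_mod_div_2[of k d])
  then have "left_tail (tag_rel i j S) k d \<in> G ` ({..<2} \<times> {..<2} \<times> range (\<lambda>(k, d). left_tail S k d))"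
    for k d
    using rangeI[of "\<lambda>(k, d). left_tail S k d" "(k div 2, (k mod 2 + d) div 2)"] by simp
  then have "finite (range (\<lambda>(k, d). left_tail (tag_rel i j S) k d))"
    using assms unfolding regular_nat_rel_def
    by (intro finite_range_in[where A = "G ` ({..<2} \<times> {..<2} \<times> range (\<lambda>(k, d). left_tail S k d))"])
      (auto split: prod.split)
  moreover
  define H where "H = (\<lambda>(t::nat, r::nat, X). {e. r = i \<and> (t + e) mod 2 = j \<and> (t + e) div 2 \<in> X})"
  have "right_tail (tag_rel i j S) k d =
      H ((k mod 2 + d) mod 2, k mod 2, right_tail S (k div 2) ((k mod 2 + d) div 2))" for k d
    by (auto simp: H_def right_tail_def tag_rel_def add_mod_div_2[of "k + d"] add_mod_div_2[of k d])
  then have "right_tail (tag_rel i j S) k d \<in> H ` ({..<2} \<times> {..<2} \<times> range (\<lambda>(k, d). right_tail S k d))"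
    for k d
    using rangeI[of "\<lambda>(k, d). right_tail S k d" "(k div 2, (k mod 2 + d) div 2)"] by simp
  then have "finite (range (\<lambda>(k, d). right_tail (tag_rel i j S) k d))"
    using assms unfolding regular_nat_rel_def
    by (intro finite_range_in[where A = "H ` ({..<2} \<times> {..<2} \<times> range (\<lambda>(k, d). right_tail S k d))"])
      (auto split: prod.split)
  ultimately show ?thesis
    unfolding regular_nat_rel_def by blast
qed

definition pullback_rel :: "nat set \<Rightarrow> (nat \<Rightarrow> 'v) \<Rightarrow> ('v \<times> 'v) set \<Rightarrow> (nat \<times> nat) set" where
  "pullback_rel A f \<rho> = {(m, n). m \<in> A \<and> n \<in> A \<and> (f m, f n) \<in> \<rho>}"

lemma conv_image_eq_conv_lang_pullback_rel:
  "{conv u v | u v. u \<in> L \<and> v \<in> L \<and> (\<phi> u, \<phi> v) \<in> \<rho>} =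
     conv_lang (pullback_rel {n. unary n \<in> L} (\<lambda>n. \<phi> (unary n)) \<rho>)"
  by (simp add: conv_image_eq_conv_lang pullback_rel_def)

lemma unary_fa_presentable_iff:
  "unary_fa_presentable X \<rho> \<longleftrightarrow>
     (\<exists>A (f :: nat \<Rightarrow> 'v). f ` A = X \<and>
        regular_nat_rel (pullback_rel A f Id) \<and> regular_nat_rel (pullback_rel A f \<rho>))"
proof
  assume "unary_fa_presentable X \<rho>"
  then obtain L and \<phi> :: "unit list \<Rightarrow> 'v" where "\<phi> ` L = X"
    and "regular {conv u v | u v. u \<in> L \<and> v \<in> L \<and> (\<phi> u, \<phi> v) \<in> Id}"
    and "regular {conv u v | u v. u \<in> L \<and> v \<in> L \<and> (\<phi> u, \<phi> v) \<in> \<rho>}"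
    unfolding unary_fa_presentable_def by auto
  moreover have "(\<lambda>n. \<phi> (unary n)) ` {n. unary n \<in> L} = \<phi> ` L"
    by (metis image_image image_unary_preimage)
  ultimately show "\<exists>A (f :: nat \<Rightarrow> 'v). f ` A = X \<and>
      regular_nat_rel (pullback_rel A f Id) \<and> regular_nat_rel (pullback_rel A f \<rho>)"
    unfolding conv_image_eq_conv_lang_pullback_rel by (blast intro: regular_imp_regular_nat_rel)
next
  assume "\<exists>A (f :: nat \<Rightarrow> 'v). f ` A = X \<and>
      regular_nat_rel (pullback_rel A f Id) \<and> regular_nat_rel (pullback_rel A f \<rho>)"
  then obtain A and f :: "nat \<Rightarrow> 'v" where X: "f ` A = X"
    and eq: "regular_nat_rel (pullback_rel A f Id)" and rel: "regular_nat_rel (pullback_rel A f \<rho>)"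
    by blast
  have "A = {m. (m, m) \<in> pullback_rel A f Id}"
    by (auto simp: pullback_rel_def)
  with eq have "regular (unary ` A)"
    by (metis regular_image_unary_iff regular_nat_set_diagonal)
  moreover have "(\<lambda>u. f (length u)) ` unary ` A = X"
    using X by (simp add: image_image)
  moreover have "pullback_rel {n. unary n \<in> unary ` A} (\<lambda>n. f (length (unary n))) R = pullback_rel A f R"
    for R
    by (simp add: mem_image_unary_iff)
  then have conv: "regular {conv u v | u v. u \<in> unary ` A \<and> v \<in> unary ` A \<and> (f (length u), f (length v)) \<in> R}"
    if "regular_nat_rel (pullback_rel A f R)" for R
    using that by (simp add: conv_image_eq_conv_lang_pullback_rel regular_nat_rel_imp_regular)
  ultimately show "unary_fa_presentable X \<rho>"
    unfolding unary_fa_presentable_def using conv[OF eq] conv[OF rel] by auto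
qed

lemma regular_nat_set_pullback_row:
  assumes "regular_nat_rel (pullback_rel A f \<rho>)" and "x \<in> f ` A"
  shows "regular_nat_set {b \<in> A. (x, f b) \<in> \<rho>}"
proof -
  obtain a where "a \<in> A" "f a = x"
    using assms(2) by blast
  then have "{b \<in> A. (x, f b) \<in> \<rho>} = {b. (a, b) \<in> pullback_rel A f \<rho>}"
    by (auto simp: pullback_rel_def)
  then show ?thesis
    using regular_nat_set_row[OF assms(1)] by simp
qed

lemma regular_nat_set_pullback_column:
  assumes "regular_nat_rel (pullback_rel A f \<rho>)" and "x \<in> f ` A"
  shows "regular_nat_set {a \<in> A. (f a, x) \<in> \<rho>}"
proof -
  obtain b where "b \<in> A" "f b = x"
    using assms(2) by blast
  then have "{a \<in> A. (f a, x) \<in> \<rho>} = {a. (a, b) \<in> pullback_rel A f \<rho>}"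
    by (auto simp: pullback_rel_def)
  then show ?thesis
    using regular_nat_set_column[OF assms(1)] by simp
qed

section \<open>Disjoint unions and collapsing vertices\<close>

lemma Id_sum: "Id = map_prod Inl Inl ` Id \<union> map_prod Inr Inr ` Id"
proof (rule set_eqI)
  fix z :: "('a + 'b) \<times> ('a + 'b)"
  show "z \<in> Id \<longleftrightarrow> z \<in> map_prod Inl Inl ` Id \<union> map_prod Inr Inr ` Id"
    by (cases z; rename_tac x y; case_tac x; case_tac y) auto
qed

lemma mem_map_prod_sum_iff:
  "(x, y) \<in> map_prod Inl Inl ` R \<union> map_prod Inr Inr ` S \<longleftrightarrow>
     (case (x, y) of (Inl a, Inl b) \<Rightarrow> (a, b) \<in> R | (Inr a, Inr b) \<Rightarrow> (a, b) \<in> S | _ \<Rightarrow> False)"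
  by (cases x; cases y) force+

lemma mem_even_odd_image_iff:
  fixes A1 A2 :: "nat set"
  shows "a \<in> (\<lambda>m. 2 * m) ` A1 \<union> (\<lambda>n. 2 * n + 1) ` A2 \<longleftrightarrow>
     (if even a then a div 2 \<in> A1 else a div 2 \<in> A2)"
proof (cases "even a")
  case True
  then show ?thesis by (auto elim!: evenE) presburger
next
  case False
  then show ?thesis by (auto elim!: oddE) presburger
qed

lemma pullback_rel_even_odd:
  "pullback_rel ((\<lambda>m. 2 * m) ` A1 \<union> (\<lambda>n. 2 * n + 1) ` A2)
       (\<lambda>a. if even a then Inl (f1 (a div 2)) else Inr (f2 (a div 2)))
       (map_prod Inl Inl ` R1 \<union> map_prod Inr Inr ` R2) =
     tag_rel 0 0 (pullback_rel A1 f1 R1) \<union> tag_rel 1 1 (pullback_rel A2 f2 R2)"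
proof -
  have "(a, b) \<in> pullback_rel ((\<lambda>m. 2 * m) ` A1 \<union> (\<lambda>n. 2 * n + 1) ` A2)
       (\<lambda>a. if even a then Inl (f1 (a div 2)) else Inr (f2 (a div 2)))
       (map_prod Inl Inl ` R1 \<union> map_prod Inr Inr ` R2) \<longleftrightarrow>
     (a, b) \<in> tag_rel 0 0 (pullback_rel A1 f1 R1) \<union> tag_rel 1 1 (pullback_rel A2 f2 R2)" for a b
    unfolding pullback_rel_def tag_rel_def mem_even_odd_image_iff mem_map_prod_sum_iff
    by (cases "even a"; cases "even b") (simp_all add: even_iff_mod_2_eq_zero odd_iff_mod_2_eq_one)
  then show ?thesis
    by auto
qed

lemma unary_fa_presentable_disjoint_union:
  assumes "unary_fa_presentable X \<rho>" and "unary_fa_presentable Y \<sigma>"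
  shows "unary_fa_presentable (Inl ` X \<union> Inr ` Y) (map_prod Inl Inl ` \<rho> \<union> map_prod Inr Inr ` \<sigma>)"
proof -
  obtain A1 and f1 :: "nat \<Rightarrow> 'a" where X: "f1 ` A1 = X"
    and eq1: "regular_nat_rel (pullback_rel A1 f1 Id)" and rel1: "regular_nat_rel (pullback_rel A1 f1 \<rho>)"
    using assms(1) unfolding unary_fa_presentable_iff by blast
  obtain A2 and f2 :: "nat \<Rightarrow> 'b" where Y: "f2 ` A2 = Y"
    and eq2: "regular_nat_rel (pullback_rel A2 f2 Id)" and rel2: "regular_nat_rel (pullback_rel A2 f2 \<sigma>)"
    using assms(2) unfolding unary_fa_presentable_iff by blast
  define A where "A = (\<lambda>m. 2 * m) ` A1 \<union> (\<lambda>n. 2 * n + 1) ` A2"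
  define f where "f a = (if even a then Inl (f1 (a div 2)) else Inr (f2 (a div 2)))" for a
  have "f (2 * m) = Inl (f1 m)" and "f (2 * m + 1) = Inr (f2 m)" for m
    by (simp_all add: f_def)
  then have "f ` A = Inl ` X \<union> Inr ` Y"
    by (simp add: A_def image_Un image_image flip: X Y)
  moreover have "regular_nat_rel (pullback_rel A f Id)"
    unfolding Id_sum A_def f_def pullback_rel_even_odd
    using eq1 eq2 by (intro regular_nat_rel_Un regular_nat_rel_tag_rel)
  moreover have "regular_nat_rel (pullback_rel A f (map_prod Inl Inl ` \<rho> \<union> map_prod Inr Inr ` \<sigma>))"
    unfolding A_def f_def pullback_rel_even_odd
    using rel1 rel2 by (intro regular_nat_rel_Un regular_nat_rel_tag_rel)
  ultimately show ?thesis
    unfolding unary_fa_presentable_iff by (intro exI[of _ A] exI[of _ f] conjI)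
qed

lemma pullback_rel_collapse_Id:
  assumes "f ` A \<subseteq> X" and "\<And>x y. x \<in> X \<Longrightarrow> y \<in> X \<Longrightarrow> h x = h y \<longleftrightarrow> x = y \<or> x \<in> P \<and> y \<in> P"
  shows "pullback_rel A (h \<circ> f) Id = pullback_rel A f Id \<union> {a \<in> A. f a \<in> P} \<times> {a \<in> A. f a \<in> P}"
proof -
  have "h (f a) = h (f b) \<longleftrightarrow> f a = f b \<or> f a \<in> P \<and> f b \<in> P" if "a \<in> A" "b \<in> A" for a b
    using that assms by blast
  then show ?thesis
    by (auto simp: pullback_rel_def)
qed

lemma map_prod_collapse_mem_iff:
  assumes "x \<in> X" and "y \<in> X" and "\<rho> \<subseteq> X \<times> X"
    and collapse: "\<And>x y. x \<in> X \<Longrightarrow> y \<in> X \<Longrightarrow> h x = h y \<longleftrightarrow> x = y \<or> x \<in> P \<and> y \<in> P"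
  shows "(h x, h y) \<in> map_prod h h ` \<rho> \<longleftrightarrow>
    (x, y) \<in> \<rho> \<or> x \<in> P \<and> (\<exists>p\<in>P. (p, y) \<in> \<rho>) \<or> (\<exists>q\<in>P. (x, q) \<in> \<rho>) \<and> y \<in> P \<or>
    x \<in> P \<and> y \<in> P \<and> \<rho> \<inter> P \<times> P \<noteq> {}"
proof -
  have "(h x, h y) \<in> map_prod h h ` \<rho> \<longleftrightarrow> (\<exists>(u, v)\<in>\<rho>. h u = h x \<and> h v = h y)"
    by force
  also have "\<dots> \<longleftrightarrow> (\<exists>(u, v)\<in>\<rho>. (u = x \<or> u \<in> P \<and> x \<in> P) \<and> (v = y \<or> v \<in> P \<and> y \<in> P))"
  proof (rule bex_cong[OF refl], clarify)
    fix u v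
    assume "(u, v) \<in> \<rho>"
    then have "u \<in> X" "v \<in> X"
      using assms(3) by auto
    then show "h u = h x \<and> h v = h y \<longleftrightarrow> (u = x \<or> u \<in> P \<and> x \<in> P) \<and> (v = y \<or> v \<in> P \<and> y \<in> P)"
      using assms(1,2) by (simp add: collapse)
  qed
  also have "\<dots> \<longleftrightarrow> (x, y) \<in> \<rho> \<or> x \<in> P \<and> (\<exists>p\<in>P. (p, y) \<in> \<rho>) \<or> (\<exists>q\<in>P. (x, q) \<in> \<rho>) \<and> y \<in> P \<or>
      x \<in> P \<and> y \<in> P \<and> \<rho> \<inter> P \<times> P \<noteq> {}"
    by blast
  finally show ?thesis .
qed

lemma pullback_rel_collapse:
  assumes "f ` A \<subseteq> X" and "\<rho> \<subseteq> X \<times> X"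
    and collapse: "\<And>x y. x \<in> X \<Longrightarrow> y \<in> X \<Longrightarrow> h x = h y \<longleftrightarrow> x = y \<or> x \<in> P \<and> y \<in> P"
  shows "pullback_rel A (h \<circ> f) (map_prod h h ` \<rho>) =
    pullback_rel A f \<rho> \<union>
    {a \<in> A. f a \<in> P} \<times> {b \<in> A. \<exists>p\<in>P. (p, f b) \<in> \<rho>} \<union>
    {a \<in> A. \<exists>q\<in>P. (f a, q) \<in> \<rho>} \<times> {b \<in> A. f b \<in> P} \<union>
    {a \<in> A. f a \<in> P} \<times> {b \<in> A. f b \<in> P \<and> \<rho> \<inter> P \<times> P \<noteq> {}}"
    (is "?lhs = ?rhs")
proof (rule set_eqI, clarify)
  fix a b
  show "(a, b) \<in> ?lhs \<longleftrightarrow> (a, b) \<in> ?rhs"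
  proof (cases "a \<in> A \<and> b \<in> A")
    case True
    then have "f a \<in> X" "f b \<in> X"
      using assms(1) by auto
    then show ?thesis
      using True by (simp add: pullback_rel_def map_prod_collapse_mem_iff[OF _ _ assms(2) collapse])
  qed (auto simp: pullback_rel_def)
qed

lemma unary_fa_presentable_collapse:
  assumes "unary_fa_presentable X \<rho>" and "\<rho> \<subseteq> X \<times> X" and "finite P" and "P \<subseteq> X"
    and collapse: "\<And>x y. x \<in> X \<Longrightarrow> y \<in> X \<Longrightarrow> h x = h y \<longleftrightarrow> x = y \<or> x \<in> P \<and> y \<in> P"
  shows "unary_fa_presentable (h ` X) (map_prod h h ` \<rho>)"
proof -
  obtain A and f :: "nat \<Rightarrow> 'a" where X: "f ` A = X"
    and eq: "regular_nat_rel (pullback_rel A f Id)" and rel: "regular_nat_rel (pullback_rel A f \<rho>)"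
    using assms(1) unfolding unary_fa_presentable_iff by blast
  have P: "\<And>x. x \<in> P \<Longrightarrow> x \<in> f ` A"
    using X assms(4) by blast
  have "{a \<in> A. f a \<in> P} = (\<Union>x\<in>P. {a \<in> A. (f a, x) \<in> Id})"
    by auto
  then have C: "regular_nat_set {a \<in> A. f a \<in> P}"
    using regular_nat_set_UN[OF assms(3)] regular_nat_set_pullback_column[OF eq P] by presburger
  have "{b \<in> A. \<exists>p\<in>P. (p, f b) \<in> \<rho>} = (\<Union>p\<in>P. {b \<in> A. (p, f b) \<in> \<rho>})"
    by auto
  then have Out: "regular_nat_set {b \<in> A. \<exists>p\<in>P. (p, f b) \<in> \<rho>}"
    using regular_nat_set_UN[OF assms(3)] regular_nat_set_pullback_row[OF rel P] by presburger
  have "{a \<in> A. \<exists>q\<in>P. (f a, q) \<in> \<rho>} = (\<Union>q\<in>P. {a \<in> A. (f a, q) \<in> \<rho>})"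
    by auto
  then have In: "regular_nat_set {a \<in> A. \<exists>q\<in>P. (f a, q) \<in> \<rho>}"
    using regular_nat_set_UN[OF assms(3)] regular_nat_set_pullback_column[OF rel P] by presburger
  have Loop: "regular_nat_set {b \<in> A. f b \<in> P \<and> \<rho> \<inter> P \<times> P \<noteq> {}}"
    using C by (cases "\<rho> \<inter> P \<times> P = {}") (simp_all add: regular_nat_set_def)
  have "(h \<circ> f) ` A = h ` X"
    by (simp add: image_comp flip: X)
  moreover have "regular_nat_rel (pullback_rel A (h \<circ> f) Id)"
    using eq C by (simp add: pullback_rel_collapse_Id[OF equalityD1[OF X] collapse]
        regular_nat_rel_Un regular_nat_rel_Times)
  moreover have "regular_nat_rel (pullback_rel A (h \<circ> f) (map_prod h h ` \<rho>))"
    using rel C Out In Loop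
    by (simp add: pullback_rel_collapse[OF equalityD1[OF X] assms(2) collapse]
        regular_nat_rel_Un regular_nat_rel_Times)
  ultimately show ?thesis
    unfolding unary_fa_presentable_iff by (intro exI[of _ A] exI[of _ "h \<circ> f"] conjI)
qed

theorem lemma6p4:
  fixes G :: "'a set" and \<gamma> :: "('a \<times> 'a) set"
    and T :: "'b set" and \<eta> :: "('b \<times> 'b) set"
    and g :: 'a and t :: 'b
  assumes "digraph G \<gamma>" and "digraph T \<eta>"
    and "unary_fa_presentable G \<gamma>" and "unary_fa_presentable T \<eta>"
    and "g \<in> G" and "t \<in> T"
  shows "unary_fa_presentable (attach_vertices G T g t) (attach_edges \<gamma> \<eta> g t)"
proof -
  let ?h = "case_sum Inl (attach_map g t)"
  let ?X = "Inl ` G \<union> Inr ` T" and ?E = "map_prod Inl Inl ` \<gamma> \<union> map_prod Inr Inr ` \<eta>"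
  have "?h x = ?h y \<longleftrightarrow> x = y \<or> x \<in> {Inl g, Inr t} \<and> y \<in> {Inl g, Inr t}" for x y
    by (cases x; cases y) (auto simp: attach_map_def)
  moreover have "?E \<subseteq> ?X \<times> ?X"
    using assms(1,2) unfolding digraph_def by auto
  moreover have "{Inl g, Inr t} \<subseteq> ?X"
    using assms(5,6) by simp
  ultimately have "unary_fa_presentable (?h ` ?X) (map_prod ?h ?h ` ?E)"
    using unary_fa_presentable_disjoint_union[OF assms(3,4)]
    by (intro unary_fa_presentable_collapse[where P = "{Inl g, Inr t}"]) simp_all
  moreover have "?h ` ?X = attach_vertices G T g t"
    by (simp add: attach_vertices_def image_Un image_image)
  moreover have "map_prod ?h ?h ` ?E = attach_edges \<gamma> \<eta> g t"
    by (simp add: attach_edges_def image_Un image_image map_prod_def case_prod_beta)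
  ultimately show ?thesis
    by simp
qed

end
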